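(* Let $\theta_1,\theta_2\in(0,\pi/2)$ satisfy $\theta_1\cot\theta_1=(\pi-\theta_2)\cot\theta_2$. Then $$\frac{\theta_1}{\sin\theta_1}+\cos\theta_1>\frac{\pi-\theta_2}{\sin\theta_2}-\cos\theta_2.$$ *)

theory Defs
  imports Complex_Main
begin

end

theory Submission
  imports Defs
begin

(*
  Write h(t) = t cot t.  The proof rests on three elementary facts on (0, pi/2):
  (1) h is nonincreasing, because h'(t) = (sin t cos t - t) / sin^2 t and sin(2t) <= 2t;
  (2) u cos u < sin u, i.e. u < tan u;
  (3) t / sin t = h(t) cos t + t sin t.
  Put c = h(theta1) = (pi - theta2) cot theta2.  Since (pi - theta2) cot theta2 > h(theta2),
  fact (1) forces theta1 <= theta2.  The function A(t) = c cos t + t sin t + cos t has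
  A'(t) = sin t (h(t) - c) <= 0 for t >= theta1, so A(theta2) <= A(theta1), and by (3)
  A(theta1) is the left-hand side of the claim.  Again by (3) the right-hand side equals
  A(theta2) - (2 cos theta2 - (pi - 2 theta2) sin theta2), and the bracket is positive by (2)
  applied to u = pi/2 - theta2.
*)

lemma mult_sin_cos_squares:
  fixes x t :: real
  shows "x * cos t * cos t + x * sin t * sin t = x"
  by (metis mult.assoc distrib_left mult_1_right power2_eq_square sin_cos_squared_add2)

lemma t_cot_antimono:
  fixes a b :: real
  assumes "0 < a" "a \<le> b" "b < pi / 2"
  shows "b * cot b \<le> a * cot a"
proof -
  have "b * cos b / sin b \<le> a * cos a / sin a"
  proof (rule DERIV_nonpos_imp_nonincreasing[OF assms(2), where f = "\<lambda>t. t * cos t / sin t"])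
    fix x :: real
    assume x: "a \<le> x" "x \<le> b"
    have sin_pos: "sin x > 0"
      using assms x by (intro sin_gt_zero) auto
    have "(cos x - x * sin x) * sin x - x * cos x * cos x
        = sin x * cos x - (x * cos x * cos x + x * sin x * sin x)"
      by algebra
    also have "\<dots> = sin x * cos x - x"
      by (simp only: mult_sin_cos_squares)
    finally have numerator: "(cos x - x * sin x) * sin x - x * cos x * cos x = sin x * cos x - x" .
    have "DERIV (\<lambda>t. t * cos t / sin t) x :> (sin x * cos x - x) / (sin x * sin x)"
      using sin_pos by (auto intro!: derivative_eq_intros simp flip: numerator)
    moreover have "sin x * cos x \<le> x"
      using sin_x_le_x[of "2 * x"] assms x by (simp add: sin_double)
    ultimately show "\<exists>y. DERIV (\<lambda>t. t * cos t / sin t) x :> y \<and> y \<le> 0"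
      using sin_pos by (intro exI conjI) (auto intro: divide_nonpos_pos)
  qed
  then show ?thesis
    by (simp add: cot_def)
qed

lemma mult_cos_less_sin:
  fixes u :: real
  assumes "0 < u" "u < pi / 2"
  shows "u * cos u < sin u"
proof -
  let ?k = "\<lambda>t::real. sin t - t * cos t"
  have deriv: "DERIV ?k t :> t * sin t" for t
    by (auto intro!: derivative_eq_intros simp: algebra_simps)
  obtain z where z: "0 < z" "z < u" "?k u - ?k 0 = (u - 0) * (z * sin z)"
    using MVT2[OF assms(1) deriv] by blast
  have "sin z > 0"
    using z assms by (intro sin_gt_zero) auto
  then have "0 < u * (z * sin z)"
    using z assms by simp
  with z show ?thesis by simp
qed

text \<open>Splitting x / sin t via sin^2 t + cos^2 t = 1; used both for x = t and for
  x = pi - t.\<close>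

lemma div_sin_eq:
  fixes x t :: real
  assumes "sin t \<noteq> 0"
  shows "x / sin t = x * cot t * cos t + x * sin t"
proof -
  have "x * cot t * cos t + x * sin t = (x * cos t * cos t + x * sin t * sin t) / sin t"
    using assms unfolding cot_def by (simp add: field_simps)
  then show ?thesis
    by (simp only: mult_sin_cos_squares)
qed

text \<open>If c = a cot a, then t \<mapsto> c cos t + t sin t + cos t is nonincreasing on [a, pi/2),
  since its derivative is sin t (t cot t - c).  Its value at a is a / sin a + cos a.\<close>

lemma cot_combination_antimono:
  fixes a b :: real
  assumes "0 < a" "a \<le> b" "b < pi / 2"
  shows "a * cot a * cos b + b * sin b + cos b \<le> a / sin a + cos a"
proof -
  define c where "c = a * cot a"
  define A where "A = (\<lambda>t. c * cos t + t * sin t + cos t)"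
  have "A b \<le> A a"
  proof (rule DERIV_nonpos_imp_nonincreasing[OF assms(2), where f = A])
    fix x :: real
    assume x: "a \<le> x" "x \<le> b"
    have sin_pos: "sin x > 0"
      using assms x by (intro sin_gt_zero) auto
    have "x * cot x \<le> c"
      unfolding c_def using assms x by (intro t_cot_antimono) auto
    then have "x * cos x \<le> c * sin x"
      using sin_pos by (simp add: cot_def divide_le_eq)
    moreover have "DERIV A x :> x * cos x - c * sin x"
      unfolding A_def by (auto intro!: derivative_eq_intros simp: algebra_simps)
    ultimately show "\<exists>y. DERIV A x :> y \<and> y \<le> 0"
      by auto
  qed
  moreover have "sin a \<noteq> 0"
    using assms by (intro sin_gt_zero[THEN less_imp_neq, THEN not_sym]) auto
  ultimately show ?thesis
    unfolding A_def c_def by (simp add: div_sin_eq)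
qed

theorem corollary4p4:
  fixes \<theta>1 \<theta>2 :: real
  assumes "0 < \<theta>1" "\<theta>1 < pi / 2"
    and "0 < \<theta>2" "\<theta>2 < pi / 2"
    and "\<theta>1 * cot \<theta>1 = (pi - \<theta>2) * cot \<theta>2"
  shows "\<theta>1 / sin \<theta>1 + cos \<theta>1 > (pi - \<theta>2) / sin \<theta>2 - cos \<theta>2"
proof -
  have sin2: "sin \<theta>2 > 0" and cos2: "cos \<theta>2 > 0"
    using assms by (auto intro: sin_gt_zero cos_gt_zero)
  then have cot2: "cot \<theta>2 > 0"
    by (simp add: cot_def)
  have "\<theta>1 \<le> \<theta>2"
  proof (rule ccontr)
    assume "\<not> \<theta>1 \<le> \<theta>2"
    then have "\<theta>1 * cot \<theta>1 \<le> \<theta>2 * cot \<theta>2"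
      using assms by (intro t_cot_antimono) auto
    moreover have "\<theta>2 * cot \<theta>2 < (pi - \<theta>2) * cot \<theta>2"
      using cot2 assms by (intro mult_strict_right_mono) auto
    ultimately show False
      using assms(5) by linarith
  qed
  then have lhs: "\<theta>1 * cot \<theta>1 * cos \<theta>2 + \<theta>2 * sin \<theta>2 + cos \<theta>2 \<le> \<theta>1 / sin \<theta>1 + cos \<theta>1"
    using assms by (intro cot_combination_antimono) auto
  have rhs: "(pi - \<theta>2) / sin \<theta>2 = \<theta>1 * cot \<theta>1 * cos \<theta>2 + (pi - \<theta>2) * sin \<theta>2"
    using sin2 div_sin_eq[of "\<theta>2" "pi - \<theta>2"] assms(5) by simp
  have "(pi / 2 - \<theta>2) * cos (pi / 2 - \<theta>2) < sin (pi / 2 - \<theta>2)"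
    using assms by (intro mult_cos_less_sin) auto
  then have "(pi / 2 - \<theta>2) * sin \<theta>2 < cos \<theta>2"
    by (simp add: cos_diff sin_diff)
  with lhs rhs show ?thesis
    by (simp add: algebra_simps)
qed

end
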